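(* Let $Q\subset\mathbb{R}^n$ and $Q'\subset\mathbb{R}^m$ be the polytopes associated with smooth toric Fano manifolds $V_1$ and $V_2$. Let $P=\mathrm{Conv}(Q,Q')\subset\mathbb{R}^{n+m}$ be the convex hull of $(Q\times\{0\})\cup(\{0\}\times Q')$, which is the polytope associated with $V_1\times V_2$. Then all critical points of $W_P$ in $(\mathbb{C}^* )^{n+m}$ are non-degenerate if and only if all critical points of $W_Q$ in $(\mathbb{C}^* )^n$ and all critical points of $W_{Q'}$ in $(\mathbb{C}^* )^m$ are non-degenerate.
   Context: The polytope associated with a smooth toric Fano manifold is the polar dual of its moment polytope. It is a lattice polytope with vertices in $\mathbb{Z}^n$ and the origin in its interior. For a lattice polytope $R\subset\mathbb{R}^n$, the superpotential is the Laurent polynomial $W_R(x)=\sum_{v\in\mathrm{vert}(R)}x^v$, where $x^v=x_1^{v_1}\cdots x_n^{v_n}$, defined on $(\mathbb{C}^* )^n$. A critical point of $W_R$ is a point of $(\mathbb{C}^* )^n$ where all partial derivatives $\partial W_R/\partial x_k$ vanish. It is non-degenerate if the Hessian matrix $(\partial^2W_R/\partial x_j\partial x_k)$ is invertible there. *)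

theory Defs
  imports "HOL-Analysis.Analysis"
begin

definition lat :: "int^'n \<Rightarrow> real^'n" where
  "lat k = (\<chi> i. of_int (k $ i))"

text \<open>Polytope associated with a smooth toric Fano manifold (smooth Fano polytope):
  a polytope with lattice vertices, the origin in its interior, and such that the
  vertices of every facet form a Z-basis of Z^n.\<close>
definition smooth_fano_polytope :: "(real^'n) set \<Rightarrow> bool" where
  "smooth_fano_polytope P \<longleftrightarrow>
     polytope P \<and> 0 \<in> interior P \<and>
     (\<forall>v. v extreme_point_of P \<longrightarrow> v \<in> range lat) \<and>
     (\<forall>F. F facet_of P \<longrightarrow>
        (\<exists>b :: 'n \<Rightarrow> int^'n. bij_betw (\<lambda>i. lat (b i)) UNIV {v. v extreme_point_of F}
                              \<and> \<bar>det (\<chi> i. b i)\<bar> = 1))"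

text \<open>Conv(Q,Q'): convex hull of (Q x {0}) \<union> ({0} x Q') in R^(n+m), coordinates indexed by 'n + 'm.\<close>
definition inl_vec :: "real^'n::finite \<Rightarrow> real^('n::finite + 'm::finite)" where
  "inl_vec x = (\<chi> i. case i of Inl a \<Rightarrow> x $ a | Inr _ \<Rightarrow> 0)"

definition inr_vec :: "real^'m::finite \<Rightarrow> real^('n::finite + 'm::finite)" where
  "inr_vec y = (\<chi> i. case i of Inl _ \<Rightarrow> 0 | Inr b \<Rightarrow> y $ b)"

definition conv_join :: "(real^'n) set \<Rightarrow> (real^'m) set \<Rightarrow> (real^('n + 'm)) set" where
  "conv_join Q Q' = convex hull (inl_vec ` Q \<union> inr_vec ` Q')"

definition superpotential :: "(real^'n) set \<Rightarrow> complex^'n \<Rightarrow> complex" where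
  "superpotential R x = (\<Sum>k \<in> {k. lat k extreme_point_of R}. \<Prod>i\<in>UNIV. (x $ i) powi (k $ i))"

definition torus :: "(complex^'n) set" where
  "torus = {x. \<forall>i. x $ i \<noteq> 0}"

definition partial :: "'n \<Rightarrow> (complex^'n \<Rightarrow> complex) \<Rightarrow> complex^'n \<Rightarrow> complex" where
  "partial j f x = deriv (\<lambda>t. f (\<chi> i. if i = j then t else x $ i)) (x $ j)"

definition critical_point :: "(complex^'n \<Rightarrow> complex) \<Rightarrow> complex^'n \<Rightarrow> bool" where
  "critical_point f x \<longleftrightarrow> x \<in> torus \<and> (\<forall>j. partial j f x = 0)"

definition hessian :: "(complex^'n \<Rightarrow> complex) \<Rightarrow> complex^'n \<Rightarrow> complex^'n^'n" where
  "hessian f x = (\<chi> j k. partial j (partial k f) x)"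

definition nondegenerate_critical_point :: "(complex^'n \<Rightarrow> complex) \<Rightarrow> complex^'n \<Rightarrow> bool" where
  "nondegenerate_critical_point f x \<longleftrightarrow> critical_point f x \<and> invertible (hessian f x)"

end

theory Submission
  imports Defs
begin

text \<open>
  Write points of R^(n+m) and of the torus (C^*)^(n+m) as pairs (y, z).
  (1) Convex geometry: since Q and Q' are convex with the origin in their interiors, the
      vertices of P = Conv(Q, Q') are exactly the vertices of Q placed in the first block
      together with the vertices of Q' placed in the second block.
  (2) Hence the superpotential splits as a function of separated variables:
      W_P(y, z) = W_Q(y) + W_Q'(z).
  (3) Calculus: for a function G(y) + H(z), critical points are pairs of critical points, and
      the Hessian is block diagonal, so it is invertible iff both blocks are.
  (4) To deduce nondegeneracy for Q from that for P one pads a critical point of W_Q with some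
      critical point of W_Q'. Such critical points exist: on the real slice x = exp(u) the
      superpotential is a sum of exponentials which is coercive because 0 is interior, so it
      has a minimiser, and the minimiser is a critical point.
\<close>

definition vleft :: "'a^('n::finite + 'm::finite) \<Rightarrow> 'a^'n" where
  "vleft x = (\<chi> a. x $ Inl a)"

definition vright :: "'a^('n::finite + 'm::finite) \<Rightarrow> 'a^'m" where
  "vright x = (\<chi> b. x $ Inr b)"

definition vjoin :: "'a^'n::finite \<Rightarrow> 'a^'m::finite \<Rightarrow> 'a^('n + 'm)" where
  "vjoin y z = (\<chi> i. case i of Inl a \<Rightarrow> y $ a | Inr b \<Rightarrow> z $ b)"

lemma vjoin_nth [simp]: "vjoin y z $ Inl a = y $ a" "vjoin y z $ Inr b = z $ b"
  by (simp_all add: vjoin_def)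

lemma vleft_vjoin [simp]: "vleft (vjoin y z) = y"
  and vright_vjoin [simp]: "vright (vjoin y z) = z"
  by (simp_all add: vleft_def vright_def vec_eq_iff)

lemma vjoin_vleft_vright [simp]: "vjoin (vleft x) (vright x) = x"
  by (auto simp: vleft_def vright_def vjoin_def vec_eq_iff split: sum.split)

lemma vjoin_eq_iff: "vjoin y z = vjoin y' z' \<longleftrightarrow> y = y' \<and> z = z'"
  by (metis vleft_vjoin vright_vjoin)

lemma vjoin_zero [simp]: "vjoin 0 0 = 0"
  by (auto simp: vec_eq_iff vjoin_def split: sum.split)

lemma inl_vec_eq_vjoin: "inl_vec x = vjoin x 0"
  and inr_vec_eq_vjoin: "inr_vec y = vjoin 0 y"
  by (auto simp: inl_vec_def inr_vec_def vjoin_def vec_eq_iff split: sum.split)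

definition sep_sum :: "('a^'n::finite \<Rightarrow> 'a::plus) \<Rightarrow> ('a^'m::finite \<Rightarrow> 'a) \<Rightarrow> 'a^('n + 'm) \<Rightarrow> 'a" where
  "sep_sum G H x = G (vleft x) + H (vright x)"

lemma linear_vleft: "linear (vleft :: real^('n::finite + 'm::finite) \<Rightarrow> real^'n)"
  and linear_vright: "linear (vright :: real^('n::finite + 'm::finite) \<Rightarrow> real^'m)"
  by (auto intro!: linearI simp: vleft_def vright_def vec_eq_iff)

lemma linear_inl_vec: "linear (inl_vec :: real^'n::finite \<Rightarrow> real^('n + 'm::finite))"
  and linear_inr_vec: "linear (inr_vec :: real^'m::finite \<Rightarrow> real^('n::finite + 'm))"
  by (auto intro!: linearI simp: inl_vec_eq_vjoin inr_vec_eq_vjoin vec_eq_iff vjoin_def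
      split: sum.split)

text \<open>The locale captures the situation of a direct sum: L embeds
  the first summand, R the second, and pL is the projection onto the first summand that kills
  the image of R. It is interpreted twice below, once with the roles of the summands swapped.\<close>
locale summand_projection =
  fixes L :: "'a::euclidean_space \<Rightarrow> 'c::euclidean_space"
    and R :: "'b::euclidean_space \<Rightarrow> 'c"
    and pL :: "'c \<Rightarrow> 'a"
  assumes linear_L: "linear L" and linear_R: "linear R" and linear_pL: "linear pL"
    and pL_L [simp]: "pL (L x) = x" and pL_R [simp]: "pL (R y) = 0"
begin

lemma join_hull_elem:
  assumes "convex Q" "convex Q'" "0 \<in> Q" "0 \<in> Q'" "x \<in> convex hull (L ` Q \<union> R ` Q')"
  obtains u s t where "0 \<le> u" "u \<le> 1" "s \<in> Q" "t \<in> Q'"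
    "x = u *\<^sub>R L s + (1 - u) *\<^sub>R R t"
proof -
  have "convex hull (L ` Q \<union> R ` Q') = {u *\<^sub>R s + v *\<^sub>R t | u v s t.
      u \<ge> 0 \<and> v \<ge> 0 \<and> u + v = 1 \<and> s \<in> L ` Q \<and> t \<in> R ` Q'}"
    using assms(1-4) linear_L linear_R by (intro convex_hull_union_two) (auto intro: convex_linear_image)
  then obtain u v s t where "u \<ge> 0" "v \<ge> 0" "u + v = 1" "s \<in> Q" "t \<in> Q'"
      "x = u *\<^sub>R L s + v *\<^sub>R R t"
    using assms(5) by blast
  then show ?thesis using that[of u s t] by (simp add: eq_diff_eq')
qed

lemma pL_combination [simp]: "pL (u *\<^sub>R L s + v *\<^sub>R R t) = u *\<^sub>R s"
  using linear_pL by (simp add: linear_add linear_scale)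

lemma pL_join_hull:
  assumes "convex Q" "convex Q'" "0 \<in> Q" "0 \<in> Q'" "x \<in> convex hull (L ` Q \<union> R ` Q')"
  shows "pL x \<in> Q"
proof -
  obtain u s t where u: "0 \<le> u" "u \<le> 1" and "s \<in> Q"
    and x: "x = u *\<^sub>R L s + (1 - u) *\<^sub>R R t"
    using join_hull_elem[OF assms] .
  have "u *\<^sub>R s + (1 - u) *\<^sub>R 0 \<in> Q"
    using convexD[OF assms(1) \<open>s \<in> Q\<close> assms(3), of u "1 - u"] u by simp
  then show ?thesis using x by simp
qed

text \<open>Over a nonzero extreme point q of Q the join contains only L q: any other point would exhibit
  q as an interior point of the segment from 0 to a point of Q.\<close>
lemma join_hull_fiber:
  assumes "convex Q" "convex Q'" "0 \<in> Q" "0 \<in> Q'" "x \<in> convex hull (L ` Q \<union> R ` Q')"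
    and q: "q extreme_point_of Q" "q \<noteq> 0" and "pL x = q"
  shows "x = L q"
proof -
  obtain u s t where u: "0 \<le> u" "u \<le> 1" and s: "s \<in> Q"
    and x: "x = u *\<^sub>R L s + (1 - u) *\<^sub>R R t"
    using join_hull_elem[OF assms(1-5)] .
  have us: "u *\<^sub>R s = q" using x \<open>pL x = q\<close> by simp
  have "u = 1"
  proof (rule ccontr)
    assume "u \<noteq> 1"
    moreover have "u \<noteq> 0" "s \<noteq> 0" using us q(2) by auto
    ultimately have "q \<in> open_segment 0 s"
      using u us unfolding in_segment by (intro conjI exI[of _ u]) auto
    then show False using q(1) s assms(3) by (auto simp: extreme_point_of_def)
  qed
  then show ?thesis using x us by simp
qed

lemma extreme_point_join:
  assumes "convex Q" "convex Q'" "0 \<in> Q" "0 \<in> Q'"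
    and q: "q extreme_point_of Q" "q \<noteq> 0"
  shows "L q extreme_point_of convex hull (L ` Q \<union> R ` Q')"
  unfolding extreme_point_of_def
proof (intro conjI ballI notI)
  show "L q \<in> convex hull (L ` Q \<union> R ` Q')"
    using q(1) by (intro hull_inc) (auto simp: extreme_point_of_def)
next
  fix a b
  assume a: "a \<in> convex hull (L ` Q \<union> R ` Q')" and b: "b \<in> convex hull (L ` Q \<union> R ` Q')"
    and "L q \<in> open_segment a b"
  then obtain w where "a \<noteq> b" "0 < w" "w < 1" and Lq: "L q = (1 - w) *\<^sub>R a + w *\<^sub>R b"
    unfolding in_segment by blast
  have q_comb: "q = (1 - w) *\<^sub>R pL a + w *\<^sub>R pL b"
    using arg_cong[OF Lq, of pL] linear_pL by (simp add: linear_add linear_scale)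
  have "pL a \<in> Q" "pL b \<in> Q" using pL_join_hull[OF assms(1-4)] a b by auto
  then have "pL a = pL b"
    using q(1) q_comb \<open>0 < w\<close> \<open>w < 1\<close> unfolding extreme_point_of_def in_segment by blast
  then have "pL a = q" "pL b = q" using q_comb by (simp_all add: algebra_simps)
  then have "a = L q" "b = L q"
    using join_hull_fiber[OF assms(1-4) _ q] a b by blast+
  then show False using \<open>a \<noteq> b\<close> by simp
qed

lemma extreme_point_join_imp:
  assumes "q \<in> Q" and Lq: "L q extreme_point_of convex hull (L ` Q \<union> R ` Q')"
  shows "q extreme_point_of Q"
  unfolding extreme_point_of_def
proof (intro conjI ballI notI)
  fix a b assume "a \<in> Q" "b \<in> Q" "q \<in> open_segment a b"
  moreover have "inj L" by (metis injI pL_L)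
  ultimately have "L q \<in> open_segment (L a) (L b)" "L a \<in> convex hull (L ` Q \<union> R ` Q')"
    "L b \<in> convex hull (L ` Q \<union> R ` Q')"
    using open_segment_linear_image[OF linear_L] by (auto intro: hull_inc)
  then show False using Lq by (auto simp: extreme_point_of_def)
qed (fact \<open>q \<in> Q\<close>)

end

lemma summand_projection_inl:
  "summand_projection (inl_vec :: real^'n::finite \<Rightarrow> real^('n + 'm::finite)) inr_vec vleft"
  by (rule summand_projection.intro)
    (simp_all only: linear_inl_vec linear_inr_vec linear_vleft inl_vec_eq_vjoin inr_vec_eq_vjoin
      vleft_vjoin)

lemma summand_projection_inr:
  "summand_projection (inr_vec :: real^'m::finite \<Rightarrow> real^('n::finite + 'm)) inl_vec vright"
  by (rule summand_projection.intro)
    (simp_all only: linear_inl_vec linear_inr_vec linear_vright inl_vec_eq_vjoin inr_vec_eq_vjoin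
      vright_vjoin)

text \<open>The vertices of Conv(Q, Q') are exactly the vertices of Q and of Q', embedded. The origin,
  being interior, is never a vertex, which is what makes both lemmas above applicable.\<close>
lemma extreme_points_conv_join:
  fixes Q :: "(real^'n) set" and Q' :: "(real^'m) set"
  assumes Q: "convex Q" "0 \<in> interior Q" and Q': "convex Q'" "0 \<in> interior Q'"
  shows "z extreme_point_of conv_join Q Q' \<longleftrightarrow>
    (\<exists>q. q extreme_point_of Q \<and> z = inl_vec q) \<or> (\<exists>q. q extreme_point_of Q' \<and> z = inr_vec q)"
proof -
  interpret inl: summand_projection "inl_vec :: real^'n \<Rightarrow> real^('n + 'm)" inr_vec vleft
    by (rule summand_projection_inl)
  interpret inr: summand_projection "inr_vec :: real^'m \<Rightarrow> real^('n + 'm)" inl_vec vright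
    by (rule summand_projection_inr)
  have zero: "0 \<in> Q" "0 \<in> Q'" using Q(2) Q'(2) interior_subset by auto
  have nonzero: "q \<noteq> 0" if "q extreme_point_of S" "0 \<in> interior S" for q :: "real^'k" and S
    using that extreme_point_not_in_interior by blast
  have swap: "conv_join Q Q' = convex hull (inr_vec ` Q' \<union> inl_vec ` Q)"
    by (simp add: conv_join_def Un_commute)
  show ?thesis
  proof
    assume z: "z extreme_point_of conv_join Q Q'"
    then have "z \<in> inl_vec ` Q \<union> inr_vec ` Q'"
      unfolding conv_join_def by (rule extreme_point_of_convex_hull)
    then show "(\<exists>q. q extreme_point_of Q \<and> z = inl_vec q) \<or> (\<exists>q. q extreme_point_of Q' \<and> z = inr_vec q)"
    proof
      assume "z \<in> inl_vec ` Q"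
      then obtain q where "q \<in> Q" "z = inl_vec q" by blast
      then have "q extreme_point_of Q"
        using z inl.extreme_point_join_imp[of q Q Q'] by (simp add: conv_join_def)
      then show ?thesis using \<open>z = inl_vec q\<close> by blast
    next
      assume "z \<in> inr_vec ` Q'"
      then obtain q where "q \<in> Q'" "z = inr_vec q" by blast
      then have "q extreme_point_of Q'"
        using z inr.extreme_point_join_imp[of q Q' Q] by (simp add: swap)
      then show ?thesis using \<open>z = inr_vec q\<close> by blast
    qed
  next
    assume "(\<exists>q. q extreme_point_of Q \<and> z = inl_vec q) \<or> (\<exists>q. q extreme_point_of Q' \<and> z = inr_vec q)"
    then show "z extreme_point_of conv_join Q Q'"
    proof (elim disjE exE conjE)
      fix q assume q: "q extreme_point_of Q" "z = inl_vec q"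
      with nonzero[OF q(1) Q(2)] show ?thesis
        using inl.extreme_point_join[OF Q(1) Q'(1) zero] by (simp add: conv_join_def)
    next
      fix q assume q: "q extreme_point_of Q'" "z = inr_vec q"
      with nonzero[OF q(1) Q'(2)] show ?thesis
        using inr.extreme_point_join[OF Q'(1) Q(1) zero(2,1)] by (simp add: swap)
    qed
  qed
qed

lemma lat_vjoin: "lat (vjoin k l) = vjoin (lat k) (lat l)"
  by (auto simp: lat_def vjoin_def vec_eq_iff split: sum.split)

lemma lat_eq_iff [simp]: "lat k = lat l \<longleftrightarrow> k = l"
  by (auto simp: lat_def vec_eq_iff)

lemma lat_zero [simp]: "lat 0 = 0"
  by (simp add: lat_def vec_eq_iff)

lemma lat_eq_0_iff [simp]: "lat k = 0 \<longleftrightarrow> k = 0"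
  by (metis lat_eq_iff lat_zero)

lemma vjoin_left_image_iff: "x \<in> (\<lambda>y. vjoin y 0) ` A \<longleftrightarrow> vleft x \<in> A \<and> vright x = 0"
proof
  assume x: "vleft x \<in> A \<and> vright x = 0"
  have "x = vjoin (vleft x) (vright x)" by simp
  then show "x \<in> (\<lambda>y. vjoin y 0) ` A" using x by auto
qed auto

lemma vjoin_right_image_iff: "x \<in> (\<lambda>z. vjoin 0 z) ` B \<longleftrightarrow> vright x \<in> B \<and> vleft x = 0"
proof
  assume x: "vright x \<in> B \<and> vleft x = 0"
  have "x = vjoin (vleft x) (vright x)" by simp
  then show "x \<in> (\<lambda>z. vjoin 0 z) ` B" using x by auto
qed auto

definition lattice_vertices :: "(real^'n) set \<Rightarrow> (int^'n) set" where
  "lattice_vertices R = {k. lat k extreme_point_of R}"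

lemma finite_lattice_vertices:
  assumes "polytope R"
  shows "finite (lattice_vertices R)"
proof -
  have "finite {v. v extreme_point_of R}"
    using assms by (intro finite_polyhedron_extreme_points polytope_imp_polyhedron)
  then have "finite (lat -` {v. v extreme_point_of R})"
    by (rule finite_vimageI) (simp add: inj_def)
  then show ?thesis by (simp add: lattice_vertices_def vimage_def)
qed

lemma zero_notin_lattice_vertices:
  assumes "0 \<in> interior R"
  shows "0 \<notin> lattice_vertices R"
proof
  assume "0 \<in> lattice_vertices R"
  then have "0 extreme_point_of R" by (simp add: lattice_vertices_def lat_zero)
  then show False using assms extreme_point_not_in_interior by blast
qed

lemma lattice_vertices_conv_join:
  fixes Q :: "(real^'n) set" and Q' :: "(real^'m) set"
  assumes "convex Q" "0 \<in> interior Q" "convex Q'" "0 \<in> interior Q'"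
  shows "lattice_vertices (conv_join Q Q') =
    (\<lambda>k. vjoin k 0) ` lattice_vertices Q \<union> (\<lambda>l. vjoin 0 l) ` lattice_vertices Q'"
proof (rule set_eqI)
  fix k :: "int^('n + 'm)"
  have lat_k: "lat k = vjoin (lat (vleft k)) (lat (vright k))"
    by (metis lat_vjoin vjoin_vleft_vright)
  have "k \<in> lattice_vertices (conv_join Q Q') \<longleftrightarrow>
      (\<exists>q. q extreme_point_of Q \<and> lat k = vjoin q 0) \<or> (\<exists>q. q extreme_point_of Q' \<and> lat k = vjoin 0 q)"
    using extreme_points_conv_join[OF assms]
    by (simp add: lattice_vertices_def inl_vec_eq_vjoin inr_vec_eq_vjoin)
  also have "\<dots> \<longleftrightarrow> (vleft k \<in> lattice_vertices Q \<and> vright k = 0) \<or>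
      (vright k \<in> lattice_vertices Q' \<and> vleft k = 0)"
    by (subst lat_k)+ (auto simp: vjoin_eq_iff lattice_vertices_def)
  also have "\<dots> \<longleftrightarrow> k \<in> (\<lambda>k. vjoin k 0) ` lattice_vertices Q \<union> (\<lambda>l. vjoin 0 l) ` lattice_vertices Q'"
    by (simp only: Un_iff vjoin_left_image_iff vjoin_right_image_iff)
  finally show "k \<in> lattice_vertices (conv_join Q Q') \<longleftrightarrow> \<dots>" .
qed

definition monomial :: "int^'n \<Rightarrow> complex^'n \<Rightarrow> complex" where
  "monomial k x = (\<Prod>i\<in>UNIV. (x $ i) powi (k $ i))"

lemma superpotential_eq: "superpotential R x = (\<Sum>k\<in>lattice_vertices R. monomial k x)"
  by (simp add: superpotential_def lattice_vertices_def monomial_def)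

lemma monomial_zero [simp]: "monomial 0 x = 1"
  by (simp add: monomial_def)

lemma monomial_vjoin: "monomial (vjoin k l) x = monomial k (vleft x) * monomial l (vright x)"
  by (simp add: monomial_def prod.Plus[of UNIV UNIV, simplified] vleft_def vright_def)

lemma superpotential_conv_join:
  fixes Q :: "(real^'n) set" and Q' :: "(real^'m) set"
  assumes Q: "polytope Q" "0 \<in> interior Q" and Q': "polytope Q'" "0 \<in> interior Q'"
  shows "superpotential (conv_join Q Q') = sep_sum (superpotential Q) (superpotential Q')"
proof
  fix x :: "complex^('n + 'm)"
  let ?K = "lattice_vertices Q" and ?K' = "lattice_vertices Q'"
  have "(\<lambda>k. vjoin k 0) ` ?K \<inter> (\<lambda>l. vjoin 0 l) ` ?K' = {}"
    using zero_notin_lattice_vertices[OF Q(2)] by (auto simp: vjoin_eq_iff)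
  then have "superpotential (conv_join Q Q') x =
      (\<Sum>k\<in>(\<lambda>k. vjoin k 0) ` ?K. monomial k x) + (\<Sum>k\<in>(\<lambda>l. vjoin 0 l) ` ?K'. monomial k x)"
    unfolding superpotential_eq lattice_vertices_conv_join[OF polytope_imp_convex[OF Q(1)] Q(2)
        polytope_imp_convex[OF Q'(1)] Q'(2)]
    using finite_lattice_vertices[OF Q(1)] finite_lattice_vertices[OF Q'(1)]
    by (intro sum.union_disjoint) auto
  also have "\<dots> = (\<Sum>k\<in>?K. monomial k (vleft x)) + (\<Sum>l\<in>?K'. monomial l (vright x))"
    by (simp add: sum.reindex inj_on_def vjoin_eq_iff monomial_vjoin)
  finally show "superpotential (conv_join Q Q') x = sep_sum (superpotential Q) (superpotential Q') x"
    by (simp add: sep_sum_def superpotential_eq)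
qed

lemma nth_Inl: "x $ Inl a = vleft x $ a"
  and nth_Inr: "x $ Inr b = vright x $ b"
  by (simp_all add: vleft_def vright_def)

lemma vleft_update_Inl: "vleft (\<chi> i. if i = Inl a then t else x $ i) = (\<chi> c. if c = a then t else vleft x $ c)"
  and vright_update_Inl: "vright (\<chi> i. if i = Inl a then t else x $ i) = vright x"
  and vleft_update_Inr: "vleft (\<chi> i. if i = Inr b then t else x $ i) = vleft x"
  and vright_update_Inr: "vright (\<chi> i. if i = Inr b then t else x $ i) = (\<chi> d. if d = b then t else vright x $ d)"
  by (auto simp: vleft_def vright_def vec_eq_iff)

text \<open>Adding a constant does not change a complex derivative (no differentiability needed, since
  the derivative is defined as a description).\<close>
lemma deriv_add_const: "deriv (\<lambda>t. g t + c) z = deriv g (z :: 'a :: real_normed_field)"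
proof -
  have "((\<lambda>t. g t + c) has_field_derivative D) (at z) \<longleftrightarrow> (g has_field_derivative D) (at z)" for D
  proof
    assume "((\<lambda>t. g t + c) has_field_derivative D) (at z)"
    from DERIV_add[OF this DERIV_const[of "- c"]] show "(g has_field_derivative D) (at z)" by simp
  next
    assume "(g has_field_derivative D) (at z)"
    from DERIV_add[OF this DERIV_const[of c]] show "((\<lambda>t. g t + c) has_field_derivative D) (at z)"
      by simp
  qed
  then show ?thesis unfolding deriv_def by simp
qed

lemma partial_sep_sum_Inl: "partial (Inl a) (sep_sum G H) = sep_sum (partial a G) (\<lambda>_. 0)"
  by (rule ext)
    (simp add: partial_def sep_sum_def vleft_update_Inl vright_update_Inl nth_Inl deriv_add_const)

lemma partial_sep_sum_Inr: "partial (Inr b) (sep_sum G H) = sep_sum (\<lambda>_. 0) (partial b H)"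
  by (rule ext)
    (simp add: partial_def sep_sum_def vleft_update_Inr vright_update_Inr nth_Inr add.commute[of "G _"]
      deriv_add_const)

lemma partial_zero [simp]: "partial j (\<lambda>_. 0) = (\<lambda>_. 0)"
  by (simp add: partial_def fun_eq_iff)

lemma torus_iff_vleft_vright: "x \<in> torus \<longleftrightarrow> vleft x \<in> torus \<and> vright x \<in> torus"
  by (simp add: torus_def split_sum_all[of "\<lambda>i. x $ i \<noteq> 0"] nth_Inl nth_Inr)

lemma critical_point_sep_sum:
  "critical_point (sep_sum G H) x \<longleftrightarrow> critical_point G (vleft x) \<and> critical_point H (vright x)"
  unfolding critical_point_def torus_iff_vleft_vright[of x]
  by (auto simp: split_sum_all[of "\<lambda>j. partial j (sep_sum G H) x = 0"]
      partial_sep_sum_Inl partial_sep_sum_Inr sep_sum_def)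

definition block_diag :: "'a::zero^'n^'n \<Rightarrow> 'a^'m^'m \<Rightarrow> 'a^('n::finite + 'm::finite)^('n + 'm)" where
  "block_diag A B = (\<chi> i j. case i of
      Inl a \<Rightarrow> (case j of Inl c \<Rightarrow> A $ a $ c | Inr _ \<Rightarrow> 0)
    | Inr b \<Rightarrow> (case j of Inl _ \<Rightarrow> 0 | Inr d \<Rightarrow> B $ b $ d))"

lemma block_diag_mult_vec: "block_diag A B *v w = vjoin (A *v vleft w) (B *v vright w)"
  by (auto simp: vec_eq_iff block_diag_def matrix_vector_mult_def sum.Plus[of UNIV UNIV, simplified]
      vjoin_def nth_Inl nth_Inr split: sum.split)

lemma invertible_iff_trivial_kernel:
  fixes M :: "'a::field^'n^'n"
  shows "invertible M \<longleftrightarrow> (\<forall>w. M *v w = 0 \<longrightarrow> w = 0)"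
  by (simp add: invertible_left_inverse matrix_left_invertible_ker)

lemma invertible_block_diag:
  fixes A :: "'a::field^'n::finite^'n" and B :: "'a^'m::finite^'m"
  shows "invertible (block_diag A B) \<longleftrightarrow> invertible A \<and> invertible B"
proof -
  have kernel: "block_diag A B *v w = 0 \<longleftrightarrow> A *v vleft w = 0 \<and> B *v vright w = 0" for w
    by (metis block_diag_mult_vec vjoin_eq_iff vjoin_zero)
  have zero: "w = 0 \<longleftrightarrow> vleft w = 0 \<and> vright w = 0" for w :: "'a^('n + 'm)"
    by (metis vjoin_vleft_vright vjoin_zero vleft_vjoin vright_vjoin)
  show ?thesis
    unfolding invertible_iff_trivial_kernel
  proof safe
    fix v assume "\<forall>w. block_diag A B *v w = 0 \<longrightarrow> w = 0" "A *v v = 0"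
    then show "v = 0" using kernel[of "vjoin v 0"] zero[of "vjoin v 0"] by simp
  next
    fix v assume "\<forall>w. block_diag A B *v w = 0 \<longrightarrow> w = 0" "B *v v = 0"
    then show "v = 0" using kernel[of "vjoin 0 v"] zero[of "vjoin 0 v"] by simp
  qed (use kernel zero in blast)
qed

text \<open>Mixed second partials of G(y) + H(z) vanish, so the Hessian is block diagonal.\<close>
lemma hessian_sep_sum:
  "hessian (sep_sum G H) x = block_diag (hessian G (vleft x)) (hessian H (vright x))"
  by (auto simp: vec_eq_iff hessian_def block_diag_def partial_sep_sum_Inl partial_sep_sum_Inr
      sep_sum_def split: sum.split)

text \<open>Nondegeneracy transfers in both directions between G(y) + H(z) and its summands, provided
  both summands have some critical point: this is used to pad a critical point of one summand
  to a critical point of the sum.\<close>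
lemma nondegenerate_sep_sum:
  assumes "\<exists>y. critical_point G y" and "\<exists>z. critical_point H z"
  shows "(\<forall>x. critical_point (sep_sum G H) x \<longrightarrow> nondegenerate_critical_point (sep_sum G H) x) \<longleftrightarrow>
    (\<forall>y. critical_point G y \<longrightarrow> nondegenerate_critical_point G y) \<and>
    (\<forall>z. critical_point H z \<longrightarrow> nondegenerate_critical_point H z)"
proof -
  obtain y0 z0 where y0: "critical_point G y0" and z0: "critical_point H z0" using assms by blast
  have nondeg: "nondegenerate_critical_point (sep_sum G H) x \<longleftrightarrow>
      nondegenerate_critical_point G (vleft x) \<and> nondegenerate_critical_point H (vright x)" for x
    by (auto simp: nondegenerate_critical_point_def critical_point_sep_sum hessian_sep_sum
        invertible_block_diag)
  show ?thesis
  proof safe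
    fix y assume "\<forall>x. critical_point (sep_sum G H) x \<longrightarrow> nondegenerate_critical_point (sep_sum G H) x"
      and "critical_point G y"
    then show "nondegenerate_critical_point G y"
      using nondeg[of "vjoin y z0"] z0 by (simp add: critical_point_sep_sum)
  next
    fix z assume "\<forall>x. critical_point (sep_sum G H) x \<longrightarrow> nondegenerate_critical_point (sep_sum G H) x"
      and "critical_point H z"
    then show "nondegenerate_critical_point H z"
      using nondeg[of "vjoin y0 z"] y0 by (simp add: critical_point_sep_sum)
  qed (simp_all add: nondeg critical_point_sep_sum)
qed

lemma monomial_update:
  "monomial k (\<chi> i. if i = j then t else x $ i) = t powi (k $ j) * (\<Prod>i\<in>UNIV - {j}. x $ i powi k $ i)"
proof -
  have "monomial k (\<chi> i. if i = j then t else x $ i) =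
      t powi (k $ j) * (\<Prod>i\<in>UNIV - {j}. (\<chi> i. if i = j then t else x $ i) $ i powi k $ i)"
    unfolding monomial_def by (subst prod.remove[of UNIV j]) auto
  also have "(\<Prod>i\<in>UNIV - {j}. (\<chi> i. if i = j then t else x $ i) $ i powi k $ i) =
      (\<Prod>i\<in>UNIV - {j}. x $ i powi k $ i)"
    by (rule prod.cong) auto
  finally show ?thesis .
qed

lemma partial_laurent:
  assumes "x \<in> torus"
  shows "x $ j * partial j (\<lambda>x. \<Sum>k\<in>K. monomial k x) x = (\<Sum>k\<in>K. of_int (k $ j) * monomial k x)"
proof -
  define c where "c k = (\<Prod>i\<in>UNIV - {j}. x $ i powi k $ i)" for k
  have xj: "x $ j \<noteq> 0" using assms by (simp add: torus_def)
  have "(\<chi> i. if i = j then x $ j else x $ i) = x" by (simp add: vec_eq_iff)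
  then have mon: "monomial k x = x $ j powi (k $ j) * c k" for k
    using monomial_update[of k j "x $ j" x] by (simp add: c_def)
  have "((\<lambda>t. \<Sum>k\<in>K. t powi (k $ j) * c k) has_field_derivative
      (\<Sum>k\<in>K. of_int (k $ j) * x $ j powi (k $ j - 1) * 1 * c k)) (at (x $ j))"
    by (intro DERIV_sum DERIV_cmult_right DERIV_power_int DERIV_ident) (use xj in auto)
  then have "partial j (\<lambda>x. \<Sum>k\<in>K. monomial k x) x =
      (\<Sum>k\<in>K. of_int (k $ j) * x $ j powi (k $ j - 1) * c k)"
    unfolding partial_def monomial_update c_def by (simp add: DERIV_imp_deriv)
  then have "x $ j * partial j (\<lambda>x. \<Sum>k\<in>K. monomial k x) x =
      (\<Sum>k\<in>K. of_int (k $ j) * (x $ j * x $ j powi (k $ j - 1)) * c k)"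
    by (simp add: sum_distrib_left algebra_simps)
  also have "\<dots> = (\<Sum>k\<in>K. of_int (k $ j) * monomial k x)"
    using xj by (simp add: mon power_int_diff mult.assoc)
  finally show ?thesis .
qed

lemma monomial_exp:
  "monomial k (\<chi> i. exp (complex_of_real (u $ i))) = complex_of_real (exp (lat k \<bullet> u))"
proof -
  have "monomial k (\<chi> i. exp (complex_of_real (u $ i))) =
      (\<Prod>i\<in>UNIV. exp (complex_of_real (of_int (k $ i) * u $ i)))"
    unfolding monomial_def by (simp add: exp_power_int)
  also have "\<dots> = exp (\<Sum>i\<in>UNIV. complex_of_real (of_int (k $ i) * u $ i))"
    by (rule exp_sum[symmetric]) simp
  also have "\<dots> = complex_of_real (exp (\<Sum>i\<in>UNIV. of_int (k $ i) * u $ i))"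
    by (simp only: of_real_sum[symmetric] exp_of_real)
  also have "(\<Sum>i\<in>UNIV. of_int (k $ i) * u $ i) = lat k \<bullet> u"
    by (simp add: inner_vec_def lat_def)
  finally show ?thesis .
qed

lemma ball_in_hull_support:
  fixes V :: "'a::real_inner set"
  assumes "0 < e" and "ball 0 e \<subseteq> convex hull V"
  shows "\<exists>v\<in>V. e / 2 * norm u \<le> v \<bullet> u"
proof (rule ccontr)
  assume "\<not> ?thesis"
  then have "V \<subseteq> {z. u \<bullet> z < e / 2 * norm u}" by (auto simp: inner_commute)
  then have hull: "convex hull V \<subseteq> {z. u \<bullet> z < e / 2 * norm u}"
    by (rule hull_minimal) (rule convex_halfspace_lt)
  define w where "w = (e / (2 * norm u)) *\<^sub>R u"
  have "norm w < e" using \<open>0 < e\<close> by (cases "u = 0") (simp_all add: w_def)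
  then have "u \<bullet> w < e / 2 * norm u" using hull assms(2) by auto
  moreover have "u \<bullet> w = e / 2 * norm u"
    by (cases "u = 0") (simp_all add: w_def power2_norm_eq_inner[symmetric] power2_eq_square)
  ultimately show False by simp
qed

lemma coercive_attains_min:
  fixes f :: "'a::euclidean_space \<Rightarrow> real"
  assumes "continuous_on UNIV f" and "0 < c" and grow: "\<And>u. c * norm u \<le> f u"
  obtains u0 where "\<And>u. f u0 \<le> f u"
proof -
  define r where "r = f 0 / c"
  have "0 \<le> r" using grow[of 0] \<open>0 < c\<close> by (simp add: r_def)
  then have "\<exists>x\<in>cball 0 r. \<forall>u\<in>cball 0 r. f x \<le> f u"
    by (intro continuous_attains_inf compact_cball continuous_on_subset[OF assms(1)]) auto
  then obtain u0 where u0: "\<And>u. u \<in> cball 0 r \<Longrightarrow> f u0 \<le> f u" by blast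
  have "f u0 \<le> f u" for u
  proof (cases "norm u \<le> r")
    case False
    then have "f 0 < c * norm u" using \<open>0 < c\<close> by (simp add: r_def field_simps)
    then show ?thesis using u0[of 0] \<open>0 \<le> r\<close> grow[of u] by simp
  qed (use u0 in simp)
  then show ?thesis by (rule that)
qed

lemma exp_sum_stationary:
  fixes K :: "(int^'n) set"
  assumes "finite K" and min: "\<And>u. (\<Sum>k\<in>K. exp (lat k \<bullet> u0)) \<le> (\<Sum>k\<in>K. exp (lat k \<bullet> u))"
  shows "(\<Sum>k\<in>K. of_int (k $ j) * exp (lat k \<bullet> u0)) = 0"
proof -
  have line: "lat k \<bullet> (u0 + t *\<^sub>R axis j 1) = lat k \<bullet> u0 + t * of_int (k $ j)" for k t
    by (simp add: inner_add_right inner_axis lat_def)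
  have "((\<lambda>t. \<Sum>k\<in>K. exp (lat k \<bullet> u0 + t * of_int (k $ j))) has_real_derivative
      (\<Sum>k\<in>K. exp (lat k \<bullet> u0) * of_int (k $ j))) (at 0)" (is "(?g has_real_derivative _) _")
    by (intro DERIV_sum) (auto intro!: derivative_eq_intros)
  moreover have "\<forall>t. \<bar>0 - t\<bar> < 1 \<longrightarrow> (\<Sum>k\<in>K. exp (lat k \<bullet> u0 + 0 * of_int (k $ j))) \<le>
      (\<Sum>k\<in>K. exp (lat k \<bullet> u0 + t * of_int (k $ j)))"
  proof (intro allI impI)
    fix t :: real
    show "(\<Sum>k\<in>K. exp (lat k \<bullet> u0 + 0 * of_int (k $ j))) \<le>
        (\<Sum>k\<in>K. exp (lat k \<bullet> u0 + t * of_int (k $ j)))"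
      using min[of "u0 + t *\<^sub>R axis j 1"] by (simp only: line) simp
  qed
  ultimately have "(\<Sum>k\<in>K. exp (lat k \<bullet> u0) * of_int (k $ j)) = 0"
    using DERIV_local_min[of ?g _ 0 1] by simp
  then show ?thesis by (simp add: mult.commute)
qed

text \<open>A Laurent polynomial with all coefficients 1 whose Newton polytope has 0 in its interior has a
  critical point on the torus: the function u \<mapsto> sum of exp(k . u) is coercive, its minimiser u0
  gives the critical point exp(u0).\<close>
lemma laurent_critical_point_exists:
  fixes K :: "(int^'n) set"
  assumes "finite K" and "0 < e" and "ball 0 e \<subseteq> convex hull (lat ` K)"
  shows "\<exists>y. critical_point (\<lambda>x. \<Sum>k\<in>K. monomial k x) y"
proof -
  define F where "F u = (\<Sum>k\<in>K. exp (lat k \<bullet> u))" for u :: "real^'n"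
  have "e / 2 * norm u \<le> F u" for u
  proof -
    obtain k where "k \<in> K" and k: "e / 2 * norm u \<le> lat k \<bullet> u"
      using ball_in_hull_support[OF assms(2,3)] by blast
    have "e / 2 * norm u < exp (lat k \<bullet> u)"
      using k exp_ge_add_one_self[of "lat k \<bullet> u"] by linarith
    also have "\<dots> \<le> F u"
      unfolding F_def using \<open>finite K\<close> \<open>k \<in> K\<close> by (intro member_le_sum) auto
    finally show ?thesis by simp
  qed
  moreover have "continuous_on UNIV F" unfolding F_def by (intro continuous_intros)
  ultimately obtain u0 where "\<And>u. F u0 \<le> F u"
    using coercive_attains_min[of F "e / 2"] \<open>0 < e\<close> by auto
  then have grad: "(\<Sum>k\<in>K. of_int (k $ j) * exp (lat k \<bullet> u0)) = 0" for j
    unfolding F_def by (rule exp_sum_stationary[OF \<open>finite K\<close>])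
  define y where "y = (\<chi> i. exp (complex_of_real (u0 $ i)))"
  have "y \<in> torus" by (simp add: torus_def y_def)
  moreover have "partial j (\<lambda>x. \<Sum>k\<in>K. monomial k x) y = 0" for j
  proof -
    have "y $ j * partial j (\<lambda>x. \<Sum>k\<in>K. monomial k x) y = (\<Sum>k\<in>K. of_int (k $ j) * monomial k y)"
      by (rule partial_laurent[OF \<open>y \<in> torus\<close>])
    also have "\<dots> = complex_of_real (\<Sum>k\<in>K. of_int (k $ j) * exp (lat k \<bullet> u0))"
      by (simp add: y_def monomial_exp)
    finally show ?thesis using grad[of j] \<open>y \<in> torus\<close> by (simp add: torus_def)
  qed
  ultimately show ?thesis unfolding critical_point_def by blast
qed

text \<open>In particular every superpotential of a lattice polytope with 0 in its interior has a critical
  point (Krein--Milman identifies the polytope with the hull of its vertices).\<close>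
lemma superpotential_critical_point_exists:
  assumes "polytope Q" and "0 \<in> interior Q" and lattice: "\<And>v. v extreme_point_of Q \<Longrightarrow> v \<in> range lat"
  shows "\<exists>y. critical_point (superpotential Q) y"
proof -
  have "Q = convex hull {v. v extreme_point_of Q}"
    using assms(1) by (intro Krein_Milman_Minkowski polytope_imp_compact polytope_imp_convex)
  also have "{v. v extreme_point_of Q} = lat ` lattice_vertices Q"
    using lattice by (auto simp: lattice_vertices_def)
  finally have hull: "Q = convex hull (lat ` lattice_vertices Q)" .
  obtain e where "0 < e" "ball 0 e \<subseteq> Q" using assms(2) mem_interior by blast
  then show ?thesis
    using laurent_critical_point_exists[OF finite_lattice_vertices[OF assms(1)]] hull
    by (simp add: superpotential_eq[abs_def])
qed

theorem mainTheorem3: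
  fixes Q :: "(real^'n) set" and Q' :: "(real^'m) set"
  assumes "smooth_fano_polytope Q" and "smooth_fano_polytope Q'"
  shows "(\<forall>x. critical_point (superpotential (conv_join Q Q')) x \<longrightarrow>
              nondegenerate_critical_point (superpotential (conv_join Q Q')) x)
         \<longleftrightarrow>
         (\<forall>y. critical_point (superpotential Q) y \<longrightarrow>
              nondegenerate_critical_point (superpotential Q) y) \<and>
         (\<forall>z. critical_point (superpotential Q') z \<longrightarrow>
              nondegenerate_critical_point (superpotential Q') z)"
proof -
  have Q: "polytope Q" "0 \<in> interior Q" "\<And>v. v extreme_point_of Q \<Longrightarrow> v \<in> range lat"
    using assms(1) by (auto simp: smooth_fano_polytope_def)
  have Q': "polytope Q'" "0 \<in> interior Q'" "\<And>v. v extreme_point_of Q' \<Longrightarrow> v \<in> range lat"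
    using assms(2) by (auto simp: smooth_fano_polytope_def)
  show ?thesis
    unfolding superpotential_conv_join[OF Q(1,2) Q'(1,2)]
    using superpotential_critical_point_exists[OF Q] superpotential_critical_point_exists[OF Q']
    by (rule nondegenerate_sep_sum)
qed

end
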